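(* Let $k\in\mathbb{R}_{\ge0}$, $(A,B,C)$ a $k$-initial triple, $(a,b,c)$ a $0$-initial triple, and $\mathbf{w}=[w_1,w_2,\dots]$ an infinite reduced sequence in which each of $1,2,3$ appears infinitely many times. For $j\ge0$ let $(X_j,Y_j,Z_j)=\mathcal{M}_k^{\mathbf{w}_j}(A,B,C)$, $(x_j,y_j,z_j)=\mathcal{M}^{\mathbf{w}_j}(a,b,c)$ and $(l_j,m_j,n_j)=(X_j/x_j,Y_j/y_j,Z_j/z_j)$. Then the sequence $\{\max(l_j,m_j,n_j)\}_{j\ge1}$ is bounded above.
   Context: For $k\in\mathbb{R}_{\ge0}$: $\mathcal{M}_{1;k}(X,Y,Z)=(k+Y+Z,Y,Z)$, $\mathcal{M}_{2;k}(X,Y,Z)=(X,k+X+Z,Z)$, $\mathcal{M}_{3;k}(X,Y,Z)=(X,Y,k+X+Y)$ on $\mathbb{R}_+^3$, $\mathcal{M}_i=\mathcal{M}_{i;0}$. A $k$-initial triple is $(A,B,C)\in\mathbb{R}_+^3$ with $A\ne B+C+k$, $B\ne A+C+k$, $C\ne A+B+k$. A sequence with entries in $\{1,2,3\}$ is reduced if consecutive entries differ; $\mathbf{w}_j=[w_1,\dots,w_j]$ ($\mathbf{w}_0$ empty), $\mathcal{M}_k^{\mathbf{w}_j}=\mathcal{M}_{w_j;k}\circ\cdots\circ\mathcal{M}_{w_1;k}$, $\mathcal{M}^{\mathbf{w}_j}=\mathcal{M}_0^{\mathbf{w}_j}$. *)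

theory Defs
  imports Complex_Main "HOL-Library.Infinite_Set"
begin

type_synonym triple = "real \<times> real \<times> real"

fun Mk :: "real \<Rightarrow> nat \<Rightarrow> triple \<Rightarrow> triple" where
  "Mk k i (X, Y, Z) =
     (if i = 1 then (k + Y + Z, Y, Z)
      else if i = 2 then (X, k + X + Z, Z)
      else if i = 3 then (X, Y, k + X + Y)
      else (X, Y, Z))"

text \<open>Composition along the prefix w_1..w_j of a sequence; the paper's w_{i+1} is w i here.\<close>
fun Mseq :: "real \<Rightarrow> (nat \<Rightarrow> nat) \<Rightarrow> nat \<Rightarrow> triple \<Rightarrow> triple" where
  "Mseq k w 0 t = t"
| "Mseq k w (Suc j) t = Mk k (w j) (Mseq k w j t)"

definition k_initial :: "real \<Rightarrow> triple \<Rightarrow> bool" where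
  "k_initial k t = (case t of (A, B, C) \<Rightarrow>
     A > 0 \<and> B > 0 \<and> C > 0 \<and>
     A \<noteq> B + C + k \<and> B \<noteq> A + C + k \<and> C \<noteq> A + B + k)"

definition reduced_inf :: "(nat \<Rightarrow> nat) \<Rightarrow> bool" where
  "reduced_inf w = ((\<forall>j. w j \<in> {1,2,3}) \<and> (\<forall>j. w j \<noteq> w (Suc j)))"

end

theory Submission
  imports Defs
begin

text \<open>Choose L with A + k \<le> L a, B + k \<le> L b, C + k \<le> L c. This domination survives
  every step: for w = 1, say, (k + Y + Z) + k = (Y + k) + (Z + k) \<le> L (y + z), and the other
  entries are unchanged. As the triples (x, y, z) stay positive, all three ratios stay \<le> L.
  Only k \<ge> 0 and the positivity of (a, b, c) are needed; the remaining hypotheses are not.\<close>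

fun dominated :: "real \<Rightarrow> real \<Rightarrow> triple \<Rightarrow> triple \<Rightarrow> bool" where
  "dominated k L (X, Y, Z) (x, y, z) \<longleftrightarrow> X + k \<le> L * x \<and> Y + k \<le> L * y \<and> Z + k \<le> L * z"

fun positive_triple :: "triple \<Rightarrow> bool" where
  "positive_triple (x, y, z) \<longleftrightarrow> x > 0 \<and> y > 0 \<and> z > 0"

lemma dominated_Mk:
  assumes "k \<ge> 0" and "dominated k L t s"
  shows "dominated k L (Mk k i t) (Mk 0 i s)"
  using assms by (cases t; cases s) (auto simp: distrib_left)

lemma dominated_Mseq:
  assumes "k \<ge> 0" and "dominated k L t s"
  shows "dominated k L (Mseq k w j t) (Mseq 0 w j s)"
  by (induction j) (simp_all add: assms dominated_Mk)

lemma positive_triple_Mk: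
  assumes "k \<ge> 0" and "positive_triple t"
  shows "positive_triple (Mk k i t)"
  using assms by (cases t) auto

lemma positive_triple_Mseq:
  assumes "k \<ge> 0" and "positive_triple t"
  shows "positive_triple (Mseq k w j t)"
  by (induction j) (simp_all add: assms positive_triple_Mk)

lemma ratios_le_if_dominated:
  assumes "k \<ge> 0" and "dominated k L t s" and "positive_triple s"
  shows "case t of (X, Y, Z) \<Rightarrow> case s of (x, y, z) \<Rightarrow> max (X / x) (max (Y / y) (Z / z)) \<le> L"
  using assms by (cases t; cases s) (auto simp: divide_le_eq mult.commute)

lemma ex_dominated:
  assumes "positive_triple s"
  shows "\<exists>L. dominated k L t s"
proof (cases t, cases s)
  fix X Y Z x y z
  assume t: "t = (X, Y, Z)" and s: "s = (x, y, z)"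
  define L where "L = max ((X + k) / x) (max ((Y + k) / y) ((Z + k) / z))"
  have "(X + k) / x \<le> L" "(Y + k) / y \<le> L" "(Z + k) / z \<le> L"
    unfolding L_def by auto
  then have "dominated k L t s"
    using assms by (simp add: t s pos_divide_le_eq mult.commute)
  then show ?thesis ..
qed

theorem proposition5p3:
  fixes k A B C a b c :: real and w :: "nat \<Rightarrow> nat"
  assumes "k \<ge> 0"
    and "k_initial k (A, B, C)"
    and "k_initial 0 (a, b, c)"
    and "reduced_inf w"
    and "\<forall>i\<in>{1,2,3::nat}. infinite {j. w j = i}"
  shows "\<exists>U. \<forall>j\<ge>1.
    (case Mseq k w j (A, B, C) of (X, Y, Z) \<Rightarrow>
     case Mseq 0 w j (a, b, c) of (x, y, z) \<Rightarrow>
       max (X / x) (max (Y / y) (Z / z)) \<le> U)"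
proof -
  have pos: "positive_triple (a, b, c)"
    using assms(3) by (simp add: k_initial_def)
  obtain L where L: "dominated k L (A, B, C) (a, b, c)"
    using ex_dominated[OF pos] by blast
  have "case Mseq k w j (A, B, C) of (X, Y, Z) \<Rightarrow>
      case Mseq 0 w j (a, b, c) of (x, y, z) \<Rightarrow> max (X / x) (max (Y / y) (Z / z)) \<le> L" for j
    by (rule ratios_le_if_dominated[OF assms(1) dominated_Mseq[OF assms(1) L]
          positive_triple_Mseq[OF order_refl pos]])
  then show ?thesis by (intro exI allI impI)
qed

end
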